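(* Let $\mathcal{X}$ be a finite set and let $P_X$ be a probability distribution on $\mathcal{X}$. For every $\alpha\in[0,\infty)$, $$\min_{P_{\hat{X}}} H_\alpha(P_X,P_{\hat{X}}) = H_\alpha(P_X),$$ where the minimum is over all probability distributions $P_{\hat{X}}$ on $\mathcal{X}$, and the minimum is attained at $P_{\hat{X}}^*=P_{X_\alpha}$.
   Context: $\mathrm{supp}(P_X)=\{x: P_X(x)>0\}$. The $\alpha$-cross entropy of two distributions $P_X,P_{\hat X}$ on $\mathcal{X}$ is $H_\alpha(P_X,P_{\hat X})=\frac{\alpha}{1-\alpha}\log\sum_{x}P_X(x)P_{\hat X}(x)^{\frac{\alpha-1}{\alpha}}$ for $\alpha\in(0,1)\cup(1,\infty)$; $H_0(P_X,P_{\hat X})=\log\max_{x\in\mathrm{supp}(P_X)}\frac{1}{P_{\hat X}(x)}$; $H_1(P_X,P_{\hat X})=-\sum_x P_X(x)\log P_{\hat X}(x)$; $H_\infty(P_X,P_{\hat X})=-\log\sum_x P_X(x)P_{\hat X}(x)$ (with the usual conventions that these may equal $+\infty$). The Rényi entropy is $H_\alpha(P_X)=\frac{1}{1-\alpha}\log\sum_x P_X(x)^\alpha$ for $\alpha\in(0,1)\cup(1,\infty)$, $H_0(P_X)=\log|\mathrm{supp}(P_X)|$, $H_1(P_X)=-\sum_x P_X(x)\log P_X(x)$, $H_\infty(P_X)=-\log\max_x P_X(x)$. The scaled distribution $P_{X_\alpha}$ is $P_{X_\alpha}(x)=P_X(x)^\alpha/\sum_{x'}P_X(x')^\alpha$ for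 $\alpha\in(0,\infty)$ (so $P_{X_1}=P_X$); $P_{X_0}(x)=1/|\mathrm{supp}(P_X)|$ for $x\in\mathrm{supp}(P_X)$ and $0$ otherwise; and for $\alpha=\infty$, $P_{X_\infty}(x)=1/|\arg\max_{x'}P_X(x')|$ for $x\in\arg\max_{x'}P_X(x')$ and $0$ otherwise. *)

theory Defs
  imports "HOL-Analysis.Analysis" "HOL-Library.Extended_Real"
begin

text \<open>Probability distributions on a finite alphabet, represented by the finite type 'a.
  Logarithms are natural logarithms.\<close>

definition is_dist :: "('a::finite \<Rightarrow> real) \<Rightarrow> bool" where
  "is_dist P \<longleftrightarrow> (\<forall>x. 0 \<le> P x) \<and> (\<Sum>x\<in>UNIV. P x) = 1"

definition supp :: "('a \<Rightarrow> real) \<Rightarrow> 'a set" where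
  "supp P = {x. P x > 0}"

definition cross_entropy :: "real \<Rightarrow> ('a::finite \<Rightarrow> real) \<Rightarrow> ('a \<Rightarrow> real) \<Rightarrow> ereal" where
  "cross_entropy \<alpha> P Q =
    (if \<alpha> = 0 then
       (if \<exists>x\<in>supp P. Q x = 0 then \<infinity>
        else ereal (ln (Max ((\<lambda>x. 1 / Q x) ` supp P))))
     else if \<alpha> = 1 then
       (if \<exists>x\<in>supp P. Q x = 0 then \<infinity>
        else ereal (- (\<Sum>x\<in>supp P. P x * ln (Q x))))
     else if \<alpha> < 1 then
       (if \<exists>x\<in>supp P. Q x = 0 then \<infinity>
        else ereal (\<alpha> / (1 - \<alpha>) * ln (\<Sum>x\<in>supp P. P x * Q x powr ((\<alpha> - 1) / \<alpha>))))
     else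
       (let S = (\<Sum>x\<in>supp P. P x * Q x powr ((\<alpha> - 1) / \<alpha>)) in
        if S = 0 then \<infinity> else ereal (\<alpha> / (1 - \<alpha>) * ln S)))"

definition renyi_entropy :: "real \<Rightarrow> ('a::finite \<Rightarrow> real) \<Rightarrow> real" where
  "renyi_entropy \<alpha> P =
    (if \<alpha> = 0 then ln (real (card (supp P)))
     else if \<alpha> = 1 then - (\<Sum>x\<in>supp P. P x * ln (P x))
     else 1 / (1 - \<alpha>) * ln (\<Sum>x\<in>supp P. P x powr \<alpha>))"

text \<open>Scaled distribution P_{X_alpha} for alpha in [0, infinity).\<close>
definition scaled_dist :: "real \<Rightarrow> ('a::finite \<Rightarrow> real) \<Rightarrow> ('a \<Rightarrow> real)" where
  "scaled_dist \<alpha> P =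
    (if \<alpha> = 0 then (\<lambda>x. if x \<in> supp P then 1 / real (card (supp P)) else 0)
     else (\<lambda>x. (if x \<in> supp P then P x powr \<alpha> else 0) /
               (\<Sum>y\<in>supp P. P y powr \<alpha>)))"

end

theory Submission
  imports Defs
begin

(* For 0 < alpha < 1 and alpha > 1 the bound is Hoelder's inequality with the conjugate
   weights alpha, 1 - alpha (respectively 1/alpha, 1 - 1/alpha), applied so that one factor
   is sum Q <= 1; alpha = 1 is Gibbs' inequality, and for alpha = 0 some x in the support
   has Q x <= 1 / card (supp P).  At Q = P_{X_alpha} = P^alpha / Z every term of the cross
   entropy sum equals P^alpha / Z^((alpha - 1)/alpha), so the sum is Z^(1/alpha). *)

lemma mem_supp_iff: "x \<in> supp P \<longleftrightarrow> 0 < P x"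
  by (simp add: supp_def)

lemma is_dist_nonneg: "is_dist P \<Longrightarrow> 0 \<le> P x"
  by (simp add: is_dist_def)

lemma is_dist_eq_0_outside_supp: "is_dist P \<Longrightarrow> x \<notin> supp P \<Longrightarrow> P x = 0"
  by (metis is_dist_nonneg less_eq_real_def mem_supp_iff)

lemma is_dist_sum_supp:
  assumes "is_dist P"
  shows "sum P (supp P) = 1"
proof -
  have "sum P UNIV = sum P (supp P)"
    by (rule sum.mono_neutral_right) (auto simp: is_dist_eq_0_outside_supp[OF assms])
  with assms show ?thesis
    by (simp add: is_dist_def)
qed

lemma is_dist_supp_nonempty: "is_dist P \<Longrightarrow> supp P \<noteq> {}"
  using is_dist_sum_supp by fastforce

lemma is_dist_sum_le_1: "is_dist Q \<Longrightarrow> sum Q A \<le> 1"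
  by (metis is_dist_def is_dist_nonneg sum_mono2 finite subset_UNIV)

lemma sum_supp_powr_pos: "is_dist P \<Longrightarrow> 0 < (\<Sum>x\<in>supp P. P x powr a)"
  by (intro sum_pos) (auto simp: is_dist_supp_nonempty mem_supp_iff)

lemma Youngs_inequality_nonneg:
  fixes a b p q :: real
  assumes "0 \<le> p" "0 \<le> q" "p + q = 1" "0 \<le> a" "0 \<le> b"
  shows "a powr p * b powr q \<le> p * a + q * b"
  using Youngs_inequality_0[OF assms(1-3)] assms by (cases "a = 0 \<or> b = 0") auto

lemma Holder_inequality_sum:
  fixes a b :: "'a \<Rightarrow> real" and p q :: real
  assumes "finite S" "0 < p" "0 < q" "p + q = 1"
    and a: "\<And>x. x \<in> S \<Longrightarrow> 0 \<le> a x" and b: "\<And>x. x \<in> S \<Longrightarrow> 0 \<le> b x"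
  shows "(\<Sum>x\<in>S. a x powr p * b x powr q) \<le> sum a S powr p * sum b S powr q"
proof -
  define A B where "A = sum a S" and "B = sum b S"
  have "A \<ge> 0" "B \<ge> 0"
    using a b by (auto simp: A_def B_def intro: sum_nonneg)
  show ?thesis
  proof (cases "A = 0 \<or> B = 0")
    case True
    then have "(\<forall>x\<in>S. a x = 0) \<or> (\<forall>x\<in>S. b x = 0)"
      using assms by (auto simp: A_def B_def sum_nonneg_eq_0_iff)
    then show ?thesis
      using assms by (auto simp: A_def B_def)
  next
    case False
    then have "A > 0" "B > 0"
      using \<open>A \<ge> 0\<close> \<open>B \<ge> 0\<close> by auto
    have "(\<Sum>x\<in>S. (a x / A) powr p * (b x / B) powr q) \<le> (\<Sum>x\<in>S. p * (a x / A) + q * (b x / B))"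
      using assms \<open>A > 0\<close> \<open>B > 0\<close> by (intro sum_mono Youngs_inequality_nonneg) auto
    also have "\<dots> = p + q"
      using \<open>A > 0\<close> \<open>B > 0\<close>
      by (simp add: sum.distrib flip: sum_distrib_left sum_divide_distrib A_def B_def)
    finally have "(\<Sum>x\<in>S. a x powr p * b x powr q) / (A powr p * B powr q) \<le> 1"
      using assms \<open>A > 0\<close> \<open>B > 0\<close>
      by (simp add: powr_divide sum_divide_distrib)
    then show ?thesis
      using \<open>A > 0\<close> \<open>B > 0\<close> by (simp add: A_def B_def)
  qed
qed

lemma Gibbs_inequality:
  fixes P Q :: "'a \<Rightarrow> real"
  assumes "finite S" and P: "\<And>x. x \<in> S \<Longrightarrow> 0 < P x" and Q: "\<And>x. x \<in> S \<Longrightarrow> 0 < Q x"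
    and "sum Q S \<le> sum P S"
  shows "(\<Sum>x\<in>S. P x * ln (Q x)) \<le> (\<Sum>x\<in>S. P x * ln (P x))"
proof -
  have "(\<Sum>x\<in>S. P x * ln (Q x)) - (\<Sum>x\<in>S. P x * ln (P x)) = (\<Sum>x\<in>S. P x * ln (Q x / P x))"
    unfolding sum_subtractf[symmetric] by (intro sum.cong) (auto simp: ln_div right_diff_distrib dest: P Q)
  also have "\<dots> \<le> (\<Sum>x\<in>S. P x * (Q x / P x - 1))"
    using P Q by (intro sum_mono mult_left_mono ln_le_minus_one) (auto intro: less_imp_le)
  also have "\<dots> = sum Q S - sum P S"
    unfolding sum_subtractf[symmetric] by (intro sum.cong) (auto simp: right_diff_distrib dest: P)
  finally show ?thesis
    using assms(4) by simp
qed

lemma card_le_Max_inverse: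
  fixes Q :: "'a \<Rightarrow> real"
  assumes "finite S" "S \<noteq> {}" and Q: "\<And>x. x \<in> S \<Longrightarrow> 0 < Q x" and "sum Q S \<le> 1"
  shows "real (card S) \<le> Max ((\<lambda>x. 1 / Q x) ` S)"
proof -
  have n: "real (card S) > 0"
    using assms by (simp add: card_gt_0_iff)
  obtain x where x: "x \<in> S" "Q x \<le> 1 / card S"
  proof (rule ccontr)
    assume "\<not> thesis"
    then have "(\<Sum>x\<in>S. 1 / card S) < sum Q S"
      using assms that by (intro sum_strict_mono) (auto simp: not_less)
    then show False
      using assms n by simp
  qed
  then have "real (card S) \<le> 1 / Q x"
    using Q[of x] n by (simp add: field_simps)
  also have "\<dots> \<le> Max ((\<lambda>x. 1 / Q x) ` S)"
    using assms x by (intro Max_ge) auto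
  finally show ?thesis .
qed

lemma sum_powr_le_cross_sum_powr:
  fixes P Q :: "'a \<Rightarrow> real"
  assumes "finite S" "0 < \<alpha>" "\<alpha> < 1" and P: "\<And>x. x \<in> S \<Longrightarrow> 0 \<le> P x"
    and Q: "\<And>x. x \<in> S \<Longrightarrow> 0 < Q x" and "sum Q S \<le> 1"
  shows "(\<Sum>x\<in>S. P x powr \<alpha>) \<le> (\<Sum>x\<in>S. P x * Q x powr ((\<alpha> - 1) / \<alpha>)) powr \<alpha>"
proof -
  let ?T = "\<Sum>x\<in>S. P x * Q x powr ((\<alpha> - 1) / \<alpha>)"
  have "(P x * Q x powr ((\<alpha> - 1) / \<alpha>)) powr \<alpha> * Q x powr (1 - \<alpha>) = P x powr \<alpha>" if "x \<in> S" for x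
  proof -
    have "(P x * Q x powr ((\<alpha> - 1) / \<alpha>)) powr \<alpha> = P x powr \<alpha> * Q x powr (\<alpha> - 1)"
      using P[OF that] \<open>0 < \<alpha>\<close> by (simp add: powr_mult powr_powr)
    then show ?thesis
      using Q[OF that] by (simp flip: powr_add)
  qed
  then have "(\<Sum>x\<in>S. P x powr \<alpha>) \<le> ?T powr \<alpha> * sum Q S powr (1 - \<alpha>)"
    using Holder_inequality_sum[of S \<alpha> "1 - \<alpha>" "\<lambda>x. P x * Q x powr ((\<alpha> - 1) / \<alpha>)" Q] assms
    by (simp add: less_imp_le)
  also have "\<dots> \<le> ?T powr \<alpha>"
    using assms sum_nonneg[of S Q] by (intro mult_left_le powr_le1 sum_nonneg) (auto simp: less_imp_le)
  finally show ?thesis .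
qed

lemma cross_sum_le_sum_powr_powr:
  fixes P Q :: "'a \<Rightarrow> real"
  assumes "finite S" "1 < \<alpha>" and P: "\<And>x. x \<in> S \<Longrightarrow> 0 \<le> P x"
    and Q: "\<And>x. x \<in> S \<Longrightarrow> 0 \<le> Q x" and "sum Q S \<le> 1"
  shows "(\<Sum>x\<in>S. P x * Q x powr ((\<alpha> - 1) / \<alpha>)) \<le> (\<Sum>x\<in>S. P x powr \<alpha>) powr (1 / \<alpha>)"
proof -
  have "(P x powr \<alpha>) powr (1 / \<alpha>) = P x" if "x \<in> S" for x
    using P[OF that] \<open>1 < \<alpha>\<close> by (simp add: powr_powr)
  then have "(\<Sum>x\<in>S. P x * Q x powr ((\<alpha> - 1) / \<alpha>))
      \<le> (\<Sum>x\<in>S. P x powr \<alpha>) powr (1 / \<alpha>) * sum Q S powr ((\<alpha> - 1) / \<alpha>)"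
    using Holder_inequality_sum[of S "1 / \<alpha>" "(\<alpha> - 1) / \<alpha>" "\<lambda>x. P x powr \<alpha>" Q] assms
    by (simp add: diff_divide_distrib)
  also have "\<dots> \<le> (\<Sum>x\<in>S. P x powr \<alpha>) powr (1 / \<alpha>)"
    using assms sum_nonneg[of S Q] by (intro mult_left_le powr_le1 sum_nonneg) auto
  finally show ?thesis .
qed

lemma renyi_entropy_le_cross_entropy:
  fixes P Q :: "'a::finite \<Rightarrow> real"
  assumes P: "is_dist P" and Q: "is_dist Q" and "0 \<le> \<alpha>"
  shows "ereal (renyi_entropy \<alpha> P) \<le> cross_entropy \<alpha> P Q"
proof (cases "\<alpha> \<le> 1 \<and> (\<exists>x\<in>supp P. Q x = 0)")
  case True
  then show ?thesis
    by (auto simp: cross_entropy_def)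
next
  case False
  let ?S = "supp P" and ?\<beta> = "(\<alpha> - 1) / \<alpha>"
  define Z T where "Z = (\<Sum>x\<in>?S. P x powr \<alpha>)" and "T = (\<Sum>x\<in>?S. P x * Q x powr ?\<beta>)"
  have P_pos: "\<And>x. x \<in> ?S \<Longrightarrow> 0 < P x" and Q_nonneg: "\<And>x. 0 \<le> Q x"
    using Q by (auto simp: mem_supp_iff is_dist_nonneg)
  have "sum Q ?S \<le> 1"
    using Q by (rule is_dist_sum_le_1)
  have "0 < Z"
    unfolding Z_def using P by (rule sum_supp_powr_pos)
  consider "\<alpha> = 0" | "\<alpha> = 1" | "0 < \<alpha>" "\<alpha> < 1" | "1 < \<alpha>"
    using \<open>0 \<le> \<alpha>\<close> by linarith
  then show ?thesis
  proof cases
    case 1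
    with False Q_nonneg have "\<And>x. x \<in> ?S \<Longrightarrow> 0 < Q x"
      by (metis less_eq_real_def zero_le_one)
    then have "real (card ?S) \<le> Max ((\<lambda>x. 1 / Q x) ` ?S)"
      using P \<open>sum Q ?S \<le> 1\<close> by (intro card_le_Max_inverse) (auto simp: is_dist_supp_nonempty)
    then have "ln (real (card ?S)) \<le> ln (Max ((\<lambda>x. 1 / Q x) ` ?S))"
      using P by (intro ln_mono) (auto simp: card_gt_0_iff is_dist_supp_nonempty)
    then show ?thesis
      using 1 False by (auto simp: cross_entropy_def renyi_entropy_def)
  next
    case 2
    with False Q_nonneg have "\<And>x. x \<in> ?S \<Longrightarrow> 0 < Q x"
      by (metis less_eq_real_def order_refl)
    then have "(\<Sum>x\<in>?S. P x * ln (Q x)) \<le> (\<Sum>x\<in>?S. P x * ln (P x))"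
      using P P_pos \<open>sum Q ?S \<le> 1\<close> by (intro Gibbs_inequality) (auto simp: is_dist_sum_supp)
    then show ?thesis
      using 2 False by (auto simp: cross_entropy_def renyi_entropy_def)
  next
    case 3
    with False Q_nonneg have Q_pos: "\<And>x. x \<in> ?S \<Longrightarrow> 0 < Q x"
      by (metis less_eq_real_def less_imp_le)
    then have "0 < T"
      unfolding T_def using P by (intro sum_pos mult_pos_pos) (auto simp: is_dist_supp_nonempty dest: P_pos Q_pos)
    have "Z \<le> T powr \<alpha>"
      unfolding Z_def T_def using 3 P_pos Q_pos \<open>sum Q ?S \<le> 1\<close>
      by (intro sum_powr_le_cross_sum_powr) (auto intro: less_imp_le)
    then have "ln Z \<le> ln (T powr \<alpha>)"
      using \<open>0 < Z\<close> by (rule ln_mono)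
    then have "ln Z \<le> \<alpha> * ln T"
      by simp
    then have "1 / (1 - \<alpha>) * ln Z \<le> \<alpha> / (1 - \<alpha>) * ln T"
      using 3 by (simp add: divide_right_mono)
    then show ?thesis
      using 3 False by (simp add: cross_entropy_def renyi_entropy_def Z_def T_def)
  next
    case 4
    show ?thesis
    proof (cases "T = 0")
      case True
      then show ?thesis
        using 4 by (simp add: cross_entropy_def T_def)
    next
      case False
      moreover have "0 \<le> T"
        unfolding T_def using Q_nonneg by (intro sum_nonneg mult_nonneg_nonneg) (auto dest: P_pos)
      ultimately have "0 < T"
        by simp
      have "T \<le> Z powr (1 / \<alpha>)"
        unfolding Z_def T_def using 4 P_pos Q_nonneg \<open>sum Q ?S \<le> 1\<close>
        by (intro cross_sum_le_sum_powr_powr) (auto intro: less_imp_le)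
      then have "ln T \<le> ln (Z powr (1 / \<alpha>))"
        using \<open>0 < T\<close> by (rule ln_mono)
      then have "ln T \<le> ln Z / \<alpha>"
        by simp
      then have "\<alpha> * ln T \<le> ln Z"
        using 4 by (simp add: pos_le_divide_eq mult.commute)
      then have "1 / (1 - \<alpha>) * ln Z \<le> \<alpha> / (1 - \<alpha>) * ln T"
        using 4 by (simp add: divide_right_mono_neg)
      then show ?thesis
        using 4 False by (simp add: cross_entropy_def renyi_entropy_def Z_def T_def Let_def)
    qed
  qed
qed

lemma is_dist_scaled_dist:
  assumes "is_dist P"
  shows "is_dist (scaled_dist \<alpha> P)"
proof (cases "\<alpha> = 0")
  case True
  have "card (supp P) > 0"
    using assms by (simp add: card_gt_0_iff is_dist_supp_nonempty)
  then show ?thesis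
    using True by (simp add: is_dist_def scaled_dist_def sum.If_cases card_gt_0_iff)
next
  case False
  have "0 < (\<Sum>y\<in>supp P. P y powr \<alpha>)"
    using assms by (rule sum_supp_powr_pos)
  then show ?thesis
    using False by (simp add: is_dist_def scaled_dist_def sum.If_cases flip: sum_divide_distrib)
qed

lemma scaled_dist_pos:
  assumes "is_dist P" "x \<in> supp P"
  shows "0 < scaled_dist \<alpha> P x"
  using assms sum_supp_powr_pos[OF assms(1), of \<alpha>]
  by (auto simp: scaled_dist_def mem_supp_iff card_gt_0_iff)

lemma sum_mult_scaled_dist_powr:
  assumes "is_dist P" "\<alpha> \<noteq> 0"
  shows "(\<Sum>x\<in>supp P. P x * scaled_dist \<alpha> P x powr ((\<alpha> - 1) / \<alpha>))
    = (\<Sum>x\<in>supp P. P x powr \<alpha>) powr (1 / \<alpha>)"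
proof -
  define Z where "Z = (\<Sum>x\<in>supp P. P x powr \<alpha>)"
  let ?\<beta> = "(\<alpha> - 1) / \<alpha>"
  have "0 < Z"
    unfolding Z_def using assms(1) by (rule sum_supp_powr_pos)
  have "1 + \<alpha> * ?\<beta> = \<alpha>" "1 - ?\<beta> = 1 / \<alpha>"
    using assms(2) by (simp_all add: field_simps)
  have "P x * scaled_dist \<alpha> P x powr ?\<beta> = P x powr \<alpha> / Z powr ?\<beta>" if "x \<in> supp P" for x
  proof -
    have "P x * scaled_dist \<alpha> P x powr ?\<beta> = P x powr 1 * P x powr (\<alpha> * ?\<beta>) / Z powr ?\<beta>"
      using that \<open>0 < Z\<close> assms(2)
      by (simp add: scaled_dist_def Z_def mem_supp_iff powr_divide powr_powr)
    also have "\<dots> = P x powr (1 + \<alpha> * ?\<beta>) / Z powr ?\<beta>"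
      by (simp only: powr_add)
    finally show ?thesis
      by (simp only: \<open>1 + \<alpha> * ?\<beta> = \<alpha>\<close>)
  qed
  then have "(\<Sum>x\<in>supp P. P x * scaled_dist \<alpha> P x powr ?\<beta>) = Z powr 1 / Z powr ?\<beta>"
    using \<open>0 < Z\<close> by (simp add: Z_def sum_divide_distrib)
  also have "\<dots> = Z powr (1 / \<alpha>)"
    by (simp only: \<open>1 - ?\<beta> = 1 / \<alpha>\<close> flip: powr_diff)
  finally show ?thesis
    by (simp add: Z_def)
qed

lemma cross_entropy_scaled_dist:
  assumes "is_dist P"
  shows "cross_entropy \<alpha> P (scaled_dist \<alpha> P) = ereal (renyi_entropy \<alpha> P)"
proof -
  have no_zero: "\<not> (\<exists>x\<in>supp P. scaled_dist \<alpha> P x = 0)"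
    by (metis scaled_dist_pos[OF assms] order_less_irrefl)
  consider "\<alpha> = 0" | "\<alpha> = 1" | "\<alpha> \<noteq> 0" "\<alpha> \<noteq> 1"
    by blast
  then show ?thesis
  proof cases
    case 1
    have "(\<lambda>x. 1 / scaled_dist \<alpha> P x) ` supp P = {real (card (supp P))}"
      using 1 is_dist_supp_nonempty[OF assms] by (simp add: scaled_dist_def image_constant_conv)
    then show ?thesis
      using 1 no_zero by (simp add: cross_entropy_def renyi_entropy_def)
  next
    case 2
    have "scaled_dist \<alpha> P x = P x" if "x \<in> supp P" for x
      using 2 that by (simp add: scaled_dist_def mem_supp_iff is_dist_sum_supp[OF assms])
    then show ?thesis
      using 2 no_zero by (simp add: cross_entropy_def renyi_entropy_def)
  next
    case 3
    define Z where "Z = (\<Sum>x\<in>supp P. P x powr \<alpha>)"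
    have "0 < Z"
      unfolding Z_def using assms by (rule sum_supp_powr_pos)
    have "\<alpha> / (1 - \<alpha>) * ln (Z powr (1 / \<alpha>)) = 1 / (1 - \<alpha>) * ln Z"
      using 3 by simp
    then show ?thesis
      using 3 no_zero \<open>0 < Z\<close> sum_mult_scaled_dist_powr[OF assms 3(1)]
      by (simp add: cross_entropy_def renyi_entropy_def Let_def Z_def)
  qed
qed

theorem theorem1:
  fixes P :: "'a::finite \<Rightarrow> real" and \<alpha> :: real
  assumes "is_dist P" and "0 \<le> \<alpha>"
  shows "(\<forall>Q. is_dist Q \<longrightarrow> ereal (renyi_entropy \<alpha> P) \<le> cross_entropy \<alpha> P Q)
         \<and> is_dist (scaled_dist \<alpha> P)
         \<and> cross_entropy \<alpha> P (scaled_dist \<alpha> P) = ereal (renyi_entropy \<alpha> P)"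
  using renyi_entropy_le_cross_entropy[OF assms(1) _ assms(2)]
    is_dist_scaled_dist[OF assms(1)] cross_entropy_scaled_dist[OF assms(1)]
  by blast

end
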